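(* Let $(\alpha_n)_{n\ge1}$ be a sequence with $0<\alpha_n<1$ for all $n$ and $\sum_n\alpha_n<\infty$, and let $E\sim(\alpha_n)$ be the associated Cantor set. Then $E$ is a nowhere dense closed set which has strong uniform density type (SUDT).
   Context: Construction of $E\sim(\alpha_n)$: start with $\mathcal{I}_0=\{[0,1]\}$. Given the collection $\mathcal{I}_{n-1}$ of $2^{n-1}$ disjoint closed intervals of equal length, obtain $\mathcal{I}_n$ by removing from each $I\in\mathcal{I}_{n-1}$ the open interval centered at the midpoint of $I$ of length $\alpha_n|I|$, leaving $2^n$ closed intervals each of length $d_n$, where $d_0=1$ and $2d_n=(1-\alpha_n)d_{n-1}$. Let $E_n=\bigcup_{I\in\mathcal{I}_n}I$ and $E=\bigcap_{n}E_n$. $|A|$ denotes Lebesgue measure. For measurable $E$ and $\gamma,\delta>0$, $E^{\gamma,\delta}=\{x\in\mathbb{R} : \forall r\in(0,\delta],\ \max\{|(x-r,x)\cap E|/r,\ |(x,x+r)\cap E|/r\}\ge\gamma\}$. $E$ has SUDT if there exist sequences $\gamma_n\nearrow1$ and $\delta_n\searrow0$ such that $E\subseteq\bigcup_{k=1}^\infty\bigcap_{n=k}^\infty E^{\gamma_n,\delta_n}$. *)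

theory Defs
  imports "HOL-Analysis.Analysis"
begin

text \<open>Intervals are represented by their endpoint pairs \<open>(a,b)\<close>,
  standing for the closed interval \<open>{a..b}\<close>. The sequence \<open>\<alpha>\<close> is indexed from 1:
  step \<open>n \<ge> 1\<close> uses \<open>\<alpha> n\<close>.\<close>

fun cantor_intervals :: "(nat \<Rightarrow> real) \<Rightarrow> nat \<Rightarrow> (real \<times> real) set" where
  "cantor_intervals \<alpha> 0 = {(0, 1)}"
| "cantor_intervals \<alpha> (Suc n) =
     (\<Union>(a, b) \<in> cantor_intervals \<alpha> n.
        (let l = (1 - \<alpha> (Suc n)) * (b - a) / 2 in {(a, a + l), (b - l, b)}))"

definition cantor_level :: "(nat \<Rightarrow> real) \<Rightarrow> nat \<Rightarrow> real set" where
  "cantor_level \<alpha> n = (\<Union>(a, b) \<in> cantor_intervals \<alpha> n. {a..b})"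

definition cantor_set :: "(nat \<Rightarrow> real) \<Rightarrow> real set" where
  "cantor_set \<alpha> = (\<Inter>n. cantor_level \<alpha> n)"

definition density_set :: "real set \<Rightarrow> real \<Rightarrow> real \<Rightarrow> real set" where
  "density_set E \<gamma> \<delta> = {x. \<forall>r \<in> {0<..\<delta>}.
      max (measure lebesgue ({x - r<..<x} \<inter> E) / r)
          (measure lebesgue ({x<..<x + r} \<inter> E) / r) \<ge> \<gamma>}"

definition SUDT :: "real set \<Rightarrow> bool" where
  "SUDT E \<longleftrightarrow> (\<exists>\<gamma> \<delta> :: nat \<Rightarrow> real.
      incseq \<gamma> \<and> \<gamma> \<longlonglongrightarrow> 1 \<and> decseq \<delta> \<and> \<delta> \<longlonglongrightarrow> 0 \<and> (\<forall>n. \<gamma> n > 0 \<and> \<delta> n > 0) \<and>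
      E \<subseteq> (\<Union>k. \<Inter>n \<in> {k..}. density_set E (\<gamma> n) (\<delta> n)))"

end

theory Submission
  imports Defs
begin

text \<open>Every interval of level \<open>n\<close> has length \<open>d\<^sub>n = \<Prod>\<^sub>j\<^sub>\<le>\<^sub>n (1 - \<alpha>\<^sub>j)/2 \<le> 2\<^sup>-\<^sup>n\<close> and loses its
  midpoint at level \<open>n + 1\<close>, so \<open>E\<close>, an intersection of finite unions of closed intervals, is
  closed with empty interior. Passing from level \<open>k\<close> to level \<open>k + m\<close> keeps at least the fraction
  \<open>(1 - \<alpha>\<^sub>k\<^sub>+\<^sub>1) \<cdots> (1 - \<alpha>\<^sub>k\<^sub>+\<^sub>m) \<ge> 1 - \<Sum>\<^sub>j\<^sub>>\<^sub>k \<alpha>\<^sub>j\<close> of a level-\<open>k\<close> interval \<open>I\<close>, hence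
  \<open>|E \<inter> I| \<ge> (1 - T\<^sub>k) |I|\<close> with \<open>T\<^sub>k = \<Sum>\<^sub>j\<^sub>>\<^sub>k \<alpha>\<^sub>j \<longrightarrow> 0\<close>. Given \<open>x \<in> E\<close> and a small radius \<open>r\<close>,
  pick \<open>k\<close> with \<open>d\<^sub>k\<^sub>+\<^sub>1 < 2r \<le> d\<^sub>k\<close>: the level-\<open>k\<close> interval containing \<open>x\<close> reaches a distance \<open>r\<close>
  beyond \<open>x\<close> on one side and has length \<open>d\<^sub>k < 8r\<close>, so \<open>E\<close> has density at least \<open>1 - 8T\<^sub>k\<close>
  on that side of \<open>x\<close>.\<close>

lemma finite_cantor_intervals: "finite (cantor_intervals \<alpha> n)"
  by (induction n) (auto simp: Let_def split_beta)

lemma mem_cantor_level_iff: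
  "x \<in> cantor_level \<alpha> n \<longleftrightarrow> (\<exists>a b. (a, b) \<in> cantor_intervals \<alpha> n \<and> a \<le> x \<and> x \<le> b)"
  unfolding cantor_level_def by force

lemma closed_cantor_level: "closed (cantor_level \<alpha> n)"
  unfolding cantor_level_def split_beta
  by (rule closed_UN) (auto simp: finite_cantor_intervals)

lemma closed_cantor_set: "closed (cantor_set \<alpha>)"
  unfolding cantor_set_def by (intro closed_INT) (simp add: closed_cantor_level)

lemma cantor_set_subset_level: "cantor_set \<alpha> \<subseteq> cantor_level \<alpha> n"
  unfolding cantor_set_def by auto

lemma sets_lebesgue_cantor_level: "cantor_level \<alpha> n \<in> sets lebesgue"
  by (simp add: borel_closed closed_cantor_level)

lemma sets_lebesgue_cantor_set: "cantor_set \<alpha> \<in> sets lebesgue"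
  by (simp add: borel_closed closed_cantor_set)

lemma lmeasurable_cantor_level_Int_interval: "cantor_level \<alpha> n \<inter> {a..b} \<in> lmeasurable"
  by (rule lmeasurable_compact) (simp add: closed_Int_compact closed_cantor_level)

lemma measure_lebesgue_Icc: "u \<le> v \<Longrightarrow> measure lebesgue {u..v::real} = v - u"
  by (subst measure_completion) auto

lemma measure_lebesgue_Ioo: "u \<le> v \<Longrightarrow> measure lebesgue {u<..<v::real} = v - u"
  by (subst measure_completion) auto

lemma measure_Int_disjoint_intervals_le:
  fixes S :: "real set"
  assumes S: "S \<in> sets lebesgue" and "a \<le> c" "c < d" "d \<le> b"
  shows "measure lebesgue (S \<inter> {a..c}) + measure lebesgue (S \<inter> {d..b}) \<le> measure lebesgue (S \<inter> {a..b})"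
proof -
  have pieces: "S \<inter> {x..y} \<in> lmeasurable" for x y
    using fmeasurable_Int_fmeasurable[OF lmeasurable_interval(1) S] by (simp add: Int_commute)
  have "(S \<inter> {a..c}) \<inter> (S \<inter> {d..b}) = {}"
    using \<open>c < d\<close> by auto
  then have "measure lebesgue (S \<inter> {a..c}) + measure lebesgue (S \<inter> {d..b})
               = measure lebesgue ((S \<inter> {a..c}) \<union> (S \<inter> {d..b}))"
    using measure_Un3[OF pieces pieces] by simp
  also have "\<dots> \<le> measure lebesgue (S \<inter> {a..b})"
    by (rule measure_mono_fmeasurable) (use assms pieces in auto)
  finally show ?thesis .
qed

lemma tendsto_zero_crossing:
  fixes f :: "nat \<Rightarrow> real"
  assumes "f \<longlonglongrightarrow> 0" "0 < e" "e \<le> f n"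
  shows "\<exists>k\<ge>n. e \<le> f k \<and> f (Suc k) < e"
proof (rule ccontr)
  assume "\<not> ?thesis"
  then have above: "e \<le> f (n + j)" for j
    by (induction j) (use assms(3) in \<open>auto simp: not_less\<close>)
  obtain N where "\<forall>j\<ge>N. f j < e"
    using order_tendstoD(2)[OF assms(1,2)] by (auto simp: eventually_sequentially)
  with above[of N] show False by (metis le_add2 not_less)
qed

definition cantor_length :: "(nat \<Rightarrow> real) \<Rightarrow> nat \<Rightarrow> real" where
  "cantor_length \<alpha> n = (\<Prod>j=1..n. (1 - \<alpha> j) / 2)"

lemma cantor_length_0 [simp]: "cantor_length \<alpha> 0 = 1"
  by (simp add: cantor_length_def)

lemma cantor_length_Suc: "cantor_length \<alpha> (Suc n) = (1 - \<alpha> (Suc n)) * cantor_length \<alpha> n / 2"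
  by (simp add: cantor_length_def prod.nat_ivl_Suc')

definition cantor_tail :: "(nat \<Rightarrow> real) \<Rightarrow> nat \<Rightarrow> real" where
  "cantor_tail \<alpha> k = (\<Sum>i. \<alpha> (Suc (i + k)))"

locale cantor_ratios =
  fixes \<alpha> :: "nat \<Rightarrow> real"
  assumes ratio_pos: "0 < \<alpha> (Suc n)"
    and ratio_less_1: "\<alpha> (Suc n) < 1"
begin

lemma cantor_length_pos: "0 < cantor_length \<alpha> n"
  by (induction n) (use ratio_less_1 in \<open>auto simp: cantor_length_Suc\<close>)

lemma cantor_length_Suc_less: "2 * cantor_length \<alpha> (Suc n) < cantor_length \<alpha> n"
  using ratio_pos[of n] cantor_length_pos[of n] by (simp add: cantor_length_Suc algebra_simps)

lemma decseq_cantor_length: "decseq (cantor_length \<alpha>)"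
proof (rule decseq_SucI)
  show "cantor_length \<alpha> (Suc n) \<le> cantor_length \<alpha> n" for n
    using cantor_length_Suc_less[of n] cantor_length_pos[of "Suc n"] by linarith
qed

lemma cantor_length_le_power: "cantor_length \<alpha> n \<le> (1/2) ^ n"
proof (induction n)
  case (Suc n)
  then show ?case using cantor_length_Suc_less[of n] by simp
qed simp

lemma cantor_length_tendsto_0: "cantor_length \<alpha> \<longlonglongrightarrow> 0"
proof (rule tendsto_sandwich[where f = "\<lambda>_. 0" and h = "\<lambda>n. (1/2) ^ n"])
  show "\<forall>\<^sub>F n in sequentially. 0 \<le> cantor_length \<alpha> n"
    using cantor_length_pos by (simp add: less_imp_le)
  show "\<forall>\<^sub>F n in sequentially. cantor_length \<alpha> n \<le> (1/2) ^ n"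
    using cantor_length_le_power by simp
qed (auto intro: LIMSEQ_realpow_zero)

lemma cantor_interval_length: "(a, b) \<in> cantor_intervals \<alpha> n \<Longrightarrow> b - a = cantor_length \<alpha> n"
  by (induction n arbitrary: a b) (auto simp: Let_def cantor_length_Suc)

lemma cantor_intervals_Suc_iff:
  "p \<in> cantor_intervals \<alpha> (Suc n) \<longleftrightarrow> (\<exists>a b. (a, b) \<in> cantor_intervals \<alpha> n \<and>
     (p = (a, a + cantor_length \<alpha> (Suc n)) \<or> p = (b - cantor_length \<alpha> (Suc n), b)))"
proof -
  have "cantor_intervals \<alpha> (Suc n) = (\<Union>(a, b) \<in> cantor_intervals \<alpha> n.
          {(a, a + cantor_length \<alpha> (Suc n)), (b - cantor_length \<alpha> (Suc n), b)})"
    unfolding cantor_intervals.simps Let_def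
    by (rule SUP_cong) (auto simp: cantor_length_Suc split: prod.splits dest!: cantor_interval_length)
  then show ?thesis by auto
qed

declare cantor_intervals.simps(2) [simp del]

lemma cantor_intervals_separated:
  assumes "p \<in> cantor_intervals \<alpha> n" "q \<in> cantor_intervals \<alpha> n" "fst p < fst q"
  shows "snd p < fst q"
  using assms
proof (induction n arbitrary: p q)
  case (Suc n)
  define l where "l = cantor_length \<alpha> (Suc n)"
  obtain a b where ab: "(a, b) \<in> cantor_intervals \<alpha> n" "p = (a, a + l) \<or> p = (b - l, b)"
    using Suc.prems(1) by (auto simp: cantor_intervals_Suc_iff l_def)
  obtain a' b' where ab': "(a', b') \<in> cantor_intervals \<alpha> n" "q = (a', a' + l) \<or> q = (b' - l, b')"
    using Suc.prems(2) by (auto simp: cantor_intervals_Suc_iff l_def)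
  have lengths: "b - a = cantor_length \<alpha> n" "b' - a' = cantor_length \<alpha> n"
    using ab(1) ab'(1) by (simp_all add: cantor_interval_length)
  have l: "0 < l" "2 * l < cantor_length \<alpha> n"
    unfolding l_def by (simp_all add: cantor_length_pos cantor_length_Suc_less)
  consider "a < a'" | "a' < a" | "a = a'" by linarith
  then show ?case
  proof cases
    case 1
    then have "b < a'" using Suc.IH[OF ab(1) ab'(1)] by simp
    then show ?thesis using ab(2) ab'(2) lengths l by auto
  next
    case 2
    then have "b' < a" using Suc.IH[OF ab'(1) ab(1)] by simp
    then show ?thesis using ab(2) ab'(2) lengths l Suc.prems(3) by auto
  next
    case 3
    then show ?thesis using ab(2) ab'(2) lengths l Suc.prems(3) by auto
  qed
qed simp

lemma cantor_level_Suc_subset: "cantor_level \<alpha> (Suc n) \<subseteq> cantor_level \<alpha> n"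
proof
  fix x assume "x \<in> cantor_level \<alpha> (Suc n)"
  then obtain a b where ab: "(a, b) \<in> cantor_intervals \<alpha> n"
    and "a \<le> x \<and> x \<le> a + cantor_length \<alpha> (Suc n) \<or> b - cantor_length \<alpha> (Suc n) \<le> x \<and> x \<le> b"
    by (auto simp: mem_cantor_level_iff cantor_intervals_Suc_iff)
  moreover have "b - a = cantor_length \<alpha> n"
    using ab by (rule cantor_interval_length)
  ultimately have "a \<le> x \<and> x \<le> b"
    using cantor_length_pos[of "Suc n"] cantor_length_Suc_less[of n] by auto
  then show "x \<in> cantor_level \<alpha> n"
    using ab by (auto simp: mem_cantor_level_iff)
qed

lemma cantor_level_antimono: "m \<le> n \<Longrightarrow> cantor_level \<alpha> n \<subseteq> cantor_level \<alpha> m"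
  by (induction n rule: dec_induct) (use cantor_level_Suc_subset in auto)

lemma midpoint_notin_cantor_level_Suc:
  assumes ab: "(a, b) \<in> cantor_intervals \<alpha> n"
  shows "(a + b) / 2 \<notin> cantor_level \<alpha> (Suc n)"
proof
  define l where "l = cantor_length \<alpha> (Suc n)"
  assume "(a + b) / 2 \<in> cantor_level \<alpha> (Suc n)"
  then obtain a' b' where ab': "(a', b') \<in> cantor_intervals \<alpha> n"
    and mid: "a' \<le> (a + b) / 2 \<and> (a + b) / 2 \<le> a' + l \<or> b' - l \<le> (a + b) / 2 \<and> (a + b) / 2 \<le> b'"
    by (auto simp: mem_cantor_level_iff cantor_intervals_Suc_iff l_def)
  have lengths: "b - a = cantor_length \<alpha> n" "b' - a' = cantor_length \<alpha> n"
    using ab ab' by (simp_all add: cantor_interval_length)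
  have l: "0 < l" "2 * l < cantor_length \<alpha> n"
    unfolding l_def by (simp_all add: cantor_length_pos cantor_length_Suc_less)
  consider "a < a'" | "a' < a" | "a = a'" by linarith
  then show False
  proof cases
    case 1
    then show False using cantor_intervals_separated[OF ab ab'] mid lengths l by auto
  next
    case 2
    then show False using cantor_intervals_separated[OF ab' ab] mid lengths l by auto
  next
    case 3
    then show False using mid lengths l by auto
  qed
qed

lemma interior_cantor_set: "interior (cantor_set \<alpha>) = {}"
proof -
  have "\<not> ball x e \<subseteq> cantor_set \<alpha>" if "0 < e" for x e
  proof
    assume ball: "ball x e \<subseteq> cantor_set \<alpha>"
    obtain n where n: "cantor_length \<alpha> n < e"
      using order_tendstoD(2)[OF cantor_length_tendsto_0 \<open>0 < e\<close>] by (auto simp: eventually_sequentially)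
    have "x \<in> cantor_level \<alpha> n"
      using ball \<open>0 < e\<close> cantor_set_subset_level by (metis centre_in_ball subsetD)
    then obtain a b where ab: "(a, b) \<in> cantor_intervals \<alpha> n" "a \<le> x" "x \<le> b"
      by (auto simp: mem_cantor_level_iff)
    have "(a + b) / 2 \<in> ball x e"
      unfolding mem_ball dist_real_def abs_less_iff
      using cantor_interval_length[OF ab(1)] ab n by (auto simp: field_simps)
    then show False
      using ball cantor_set_subset_level midpoint_notin_cantor_level_Suc[OF ab(1)] by blast
  qed
  then show ?thesis by (meson equals0I mem_interior)
qed

end

locale summable_cantor_ratios = cantor_ratios +
  assumes summable_ratios: "summable (\<lambda>n. \<alpha> (Suc n))"
begin

lemma summable_ratios_from: "summable (\<lambda>i. \<alpha> (Suc (i + k)))"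
  using summable_ratios summable_iff_shift[of "\<lambda>n. \<alpha> (Suc n)" k] by simp

lemma sum_ratios_le_cantor_tail: "(\<Sum>i<m. \<alpha> (Suc (i + k))) \<le> cantor_tail \<alpha> k"
  unfolding cantor_tail_def
  by (rule sum_le_suminf[OF summable_ratios_from]) (auto simp: less_imp_le[OF ratio_pos])

lemma cantor_tail_nonneg: "0 \<le> cantor_tail \<alpha> k"
  unfolding cantor_tail_def
  by (rule suminf_nonneg[OF summable_ratios_from]) (simp add: less_imp_le[OF ratio_pos])

lemma cantor_tail_Suc: "cantor_tail \<alpha> k = \<alpha> (Suc k) + cantor_tail \<alpha> (Suc k)"
  using suminf_split_head[OF summable_ratios_from[of k]] by (simp add: cantor_tail_def)

lemma decseq_cantor_tail: "decseq (cantor_tail \<alpha>)"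
proof (rule decseq_SucI)
  show "cantor_tail \<alpha> (Suc n) \<le> cantor_tail \<alpha> n" for n
    using cantor_tail_Suc[of n] ratio_pos[of n] by linarith
qed

lemma cantor_tail_tendsto_0: "cantor_tail \<alpha> \<longlonglongrightarrow> 0"
  using suminf_exist_split2[OF summable_ratios] by (simp add: cantor_tail_def[abs_def])

lemma measure_cantor_level_Int_interval:
  assumes "(a, b) \<in> cantor_intervals \<alpha> k"
  shows "(1 - (\<Sum>i<m. \<alpha> (Suc (i + k)))) * cantor_length \<alpha> k
           \<le> measure lebesgue (cantor_level \<alpha> (k + m) \<inter> {a..b})"
  using assms
proof (induction m arbitrary: k a b)
  case 0
  then have "cantor_level \<alpha> k \<inter> {a..b} = {a..b}"
    by (force simp: mem_cantor_level_iff)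
  then show ?case
    using cantor_interval_length[OF 0] cantor_length_pos[of k] by (simp add: measure_lebesgue_Icc)
next
  case (Suc m)
  define l where "l = cantor_length \<alpha> (Suc k)"
  define S where "S = (\<Sum>i<m. \<alpha> (Suc (i + Suc k)))"
  have length: "b - a = cantor_length \<alpha> k"
    using Suc.prems by (rule cantor_interval_length)
  have l: "0 < l" "2 * l < cantor_length \<alpha> k"
    unfolding l_def by (simp_all add: cantor_length_pos cantor_length_Suc_less)
  have children: "(a, a + l) \<in> cantor_intervals \<alpha> (Suc k)" "(b - l, b) \<in> cantor_intervals \<alpha> (Suc k)"
    using Suc.prems by (auto simp: cantor_intervals_Suc_iff l_def)
  have "0 \<le> S \<and> 0 \<le> \<alpha> (Suc k)"
    unfolding S_def using ratio_pos by (simp add: less_imp_le sum_nonneg)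
  then have "1 - (\<alpha> (Suc k) + S) \<le> (1 - S) * (1 - \<alpha> (Suc k))"
    by (simp add: algebra_simps)
  then have "(1 - (\<alpha> (Suc k) + S)) * cantor_length \<alpha> k \<le> (1 - S) * l + (1 - S) * l"
    using cantor_length_pos[of k] by (simp add: l_def cantor_length_Suc mult_right_mono)
  also have "\<dots> \<le> measure lebesgue (cantor_level \<alpha> (Suc k + m) \<inter> {a..a + l})
                  + measure lebesgue (cantor_level \<alpha> (Suc k + m) \<inter> {b - l..b})"
    using Suc.IH[OF children(1)] Suc.IH[OF children(2)]
    by (intro add_mono) (simp_all add: S_def l_def)
  also have "\<dots> \<le> measure lebesgue (cantor_level \<alpha> (k + Suc m) \<inter> {a..b})"
    using measure_Int_disjoint_intervals_le[OF sets_lebesgue_cantor_level] l length by simp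
  also have "\<alpha> (Suc k) + S = (\<Sum>i<Suc m. \<alpha> (Suc (i + k)))"
    unfolding S_def by (subst sum.lessThan_Suc_shift) simp
  finally show ?case .
qed

lemma measure_cantor_set_Int_interval:
  assumes ab: "(a, b) \<in> cantor_intervals \<alpha> k"
  shows "(1 - cantor_tail \<alpha> k) * cantor_length \<alpha> k \<le> measure lebesgue (cantor_set \<alpha> \<inter> {a..b})"
proof -
  define A where "A n = cantor_level \<alpha> n \<inter> {a..b}" for n
  have "(\<lambda>n. measure lebesgue (A n)) \<longlonglongrightarrow> measure lebesgue (\<Inter>n. A n)"
  proof (rule Lim_measure_decseq)
    show "range A \<subseteq> sets lebesgue"
      using lmeasurable_cantor_level_Int_interval by (auto simp: A_def)
    show "emeasure lebesgue (A n) \<noteq> \<infinity>" for n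
      using fmeasurableD2[OF lmeasurable_cantor_level_Int_interval] by (simp add: A_def)
    show "decseq A"
      using cantor_level_antimono by (auto simp: decseq_def A_def)
  qed
  moreover have "(\<Inter>n. A n) = cantor_set \<alpha> \<inter> {a..b}"
    unfolding A_def cantor_set_def by auto
  moreover have "(1 - cantor_tail \<alpha> k) * cantor_length \<alpha> k \<le> measure lebesgue (A (k + m))" for m
  proof -
    have "(1 - cantor_tail \<alpha> k) * cantor_length \<alpha> k \<le> (1 - (\<Sum>i<m. \<alpha> (Suc (i + k)))) * cantor_length \<alpha> k"
      using sum_ratios_le_cantor_tail[of k m] cantor_length_pos[of k] by (simp add: mult_right_mono)
    also have "\<dots> \<le> measure lebesgue (A (k + m))"
      unfolding A_def by (rule measure_cantor_level_Int_interval[OF ab])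
    finally show ?thesis .
  qed
  ultimately show ?thesis
    by (intro LIMSEQ_le_const[of "\<lambda>n. measure lebesgue (A n)"]) (auto dest!: le_Suc_ex)
qed

lemma measure_cantor_set_Int_subinterval:
  assumes ab: "(a, b) \<in> cantor_intervals \<alpha> k" and uv: "a \<le> u" "u \<le> v" "v \<le> b"
  shows "v - u - cantor_tail \<alpha> k * cantor_length \<alpha> k \<le> measure lebesgue ({u<..<v} \<inter> cantor_set \<alpha>)"
proof -
  note E = sets_lebesgue_cantor_set[of \<alpha>]
  have intervals: "{a..b} \<in> sets lebesgue" "{u<..<v} \<in> sets lebesgue"
    by (simp_all add: fmeasurableD)
  have "({u<..<v} \<inter> cantor_set \<alpha>) \<union> ({a..b} - {u<..<v}) \<in> lmeasurable"
    by (rule fmeasurableI2[of "{a..b}"]) (use uv in \<open>auto intro!: sets.Un sets.Int sets.Diff E intervals\<close>)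
  then have "measure lebesgue (cantor_set \<alpha> \<inter> {a..b})
               \<le> measure lebesgue (({u<..<v} \<inter> cantor_set \<alpha>) \<union> ({a..b} - {u<..<v}))"
    by (rule measure_mono_fmeasurable[rotated 2]) (auto intro!: sets.Int E intervals)
  also have "\<dots> \<le> measure lebesgue ({u<..<v} \<inter> cantor_set \<alpha>) + measure lebesgue ({a..b} - {u<..<v})"
    by (rule measure_Un_le) (use E in auto)
  also have "measure lebesgue ({a..b} - {u<..<v}) = (b - a) - (v - u)"
    using uv by (subst measurable_measure_Diff) (auto simp: measure_lebesgue_Icc measure_lebesgue_Ioo)
  finally show ?thesis
    using measure_cantor_set_Int_interval[OF ab] cantor_interval_length[OF ab]
    by (simp add: algebra_simps)
qed

lemma cantor_set_one_sided_density:
  assumes x: "x \<in> cantor_set \<alpha>" and tail: "cantor_tail \<alpha> n \<le> 1/2"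
    and r: "0 < r" "r \<le> cantor_length \<alpha> n / 2"
  shows "1 - 8 * cantor_tail \<alpha> n \<le> max (measure lebesgue ({x - r<..<x} \<inter> cantor_set \<alpha>) / r)
           (measure lebesgue ({x<..<x + r} \<inter> cantor_set \<alpha>) / r)"
proof -
  obtain k where k: "n \<le> k" "2 * r \<le> cantor_length \<alpha> k" "cantor_length \<alpha> (Suc k) < 2 * r"
    using tendsto_zero_crossing[OF cantor_length_tendsto_0, of "2 * r" n] r by auto
  have tail_k: "cantor_tail \<alpha> k \<le> cantor_tail \<alpha> n"
    using decseq_cantor_tail k(1) by (simp add: decseq_def)
  have "\<alpha> (Suc k) \<le> 1/2"
    using cantor_tail_Suc[of k] cantor_tail_nonneg[of "Suc k"] tail_k tail by linarith
  then have "cantor_length \<alpha> k \<le> 4 * cantor_length \<alpha> (Suc k)"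
    using cantor_length_pos[of k] by (simp add: cantor_length_Suc algebra_simps)
  then have error_bound: "cantor_tail \<alpha> k * cantor_length \<alpha> k \<le> cantor_tail \<alpha> n * (8 * r)"
    using k(3) tail_k cantor_tail_nonneg[of k] cantor_length_pos[of k] by (intro mult_mono) auto
  have side: "1 - 8 * cantor_tail \<alpha> n \<le> measure lebesgue ({u<..<v} \<inter> cantor_set \<alpha>) / r"
    if "(a, b) \<in> cantor_intervals \<alpha> k" "a \<le> u" "v \<le> b" "v - u = r" for a b u v
  proof -
    have "(1 - 8 * cantor_tail \<alpha> n) * r \<le> measure lebesgue ({u<..<v} \<inter> cantor_set \<alpha>)"
      using measure_cantor_set_Int_subinterval[OF that(1,2) _ that(3)] that(4) r(1) error_bound
      by (simp add: algebra_simps)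
    then show ?thesis
      using r(1) by (simp add: pos_le_divide_eq)
  qed
  obtain a b where ab: "(a, b) \<in> cantor_intervals \<alpha> k" "a \<le> x" "x \<le> b"
    using x cantor_set_subset_level by (force simp: mem_cantor_level_iff)
  have "x + r \<le> b \<or> a \<le> x - r"
    using cantor_interval_length[OF ab(1)] k(2) by linarith
  then show ?thesis
    using side[OF ab(1), of x "x + r"] side[OF ab(1), of "x - r" x] ab by auto
qed

lemma SUDT_cantor_set: "SUDT (cantor_set \<alpha>)"
proof -
  obtain K where K: "cantor_tail \<alpha> K < 1/8"
    using order_tendstoD(2)[OF cantor_tail_tendsto_0, of "1/8"] by (auto simp: eventually_sequentially)
  define \<gamma> where "\<gamma> n = 1 - 8 * cantor_tail \<alpha> (n + K)" for n
  define \<delta> where "\<delta> n = cantor_length \<alpha> (n + K) / 2" for n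
  have tail_le: "cantor_tail \<alpha> (n + K) \<le> cantor_tail \<alpha> K" for n
    using decseq_cantor_tail by (simp add: decseq_def)
  have "incseq \<gamma>"
    using decseq_cantor_tail by (simp add: \<gamma>_def incseq_def decseq_def)
  moreover have "\<gamma> \<longlonglongrightarrow> 1"
    unfolding \<gamma>_def
    using tendsto_diff[OF tendsto_const tendsto_mult[OF tendsto_const
          LIMSEQ_ignore_initial_segment[OF cantor_tail_tendsto_0, of K]], of 1 8]
    by simp
  moreover have "decseq \<delta>"
    using decseq_cantor_length by (simp add: \<delta>_def decseq_def divide_right_mono)
  moreover have "\<delta> \<longlonglongrightarrow> 0"
    unfolding \<delta>_def
    using tendsto_divide[OF LIMSEQ_ignore_initial_segment[OF cantor_length_tendsto_0, of K] tendsto_const, of 2]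
    by simp
  moreover have "\<gamma> n > 0 \<and> \<delta> n > 0" for n
    using tail_le[of n] K cantor_length_pos[of "n + K"] by (simp add: \<gamma>_def \<delta>_def)
  moreover have "cantor_set \<alpha> \<subseteq> (\<Union>k. \<Inter>n \<in> {k..}. density_set (cantor_set \<alpha>) (\<gamma> n) (\<delta> n))"
  proof -
    have "cantor_set \<alpha> \<subseteq> density_set (cantor_set \<alpha>) (\<gamma> n) (\<delta> n)" for n
    proof
      fix x assume "x \<in> cantor_set \<alpha>"
      moreover have "cantor_tail \<alpha> (n + K) \<le> 1/2"
        using tail_le[of n] K by linarith
      ultimately show "x \<in> density_set (cantor_set \<alpha>) (\<gamma> n) (\<delta> n)"
        using cantor_set_one_sided_density[of x "n + K"] by (auto simp: density_set_def \<gamma>_def \<delta>_def)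
    qed
    then show ?thesis by blast
  qed
  ultimately show ?thesis
    unfolding SUDT_def by blast
qed

end

theorem theorem3p2:
  fixes \<alpha> :: "nat \<Rightarrow> real"
  assumes "\<And>n. n \<ge> 1 \<Longrightarrow> 0 < \<alpha> n \<and> \<alpha> n < 1"
    and "summable (\<lambda>n. \<alpha> (Suc n))"
  shows "closed (cantor_set \<alpha>) \<and> interior (closure (cantor_set \<alpha>)) = {} \<and> SUDT (cantor_set \<alpha>)"
proof -
  interpret summable_cantor_ratios \<alpha>
    using assms by unfold_locales auto
  show ?thesis
    using closed_cantor_set interior_cantor_set SUDT_cantor_set by simp
qed

end
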